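(* Let $k$ be a field of characteristic $0$, let $\mathfrak n=\langle X,Z_1,Z_2\rangle$ be the $3$-dimensional Heisenberg GNLA with $\deg X=\deg Z_1=-1$, $\deg Z_2=-2$ and only non-zero bracket $[X,Z_1]=Z_2$, let $W=\langle Z_1\rangle\subset\mathfrak n_{-1}$, and for $s\ge2$ let $V=\langle Y_1,\dots,Y_s\rangle$, $\deg Y_i=-i$, be the $\mathfrak n$-module with $X.Y_i=Y_{i+1}$ ($i<s$), $X.Y_s=0$, and $Z_1,Z_2$ acting trivially. Then every special extension $\mathfrak m$ of $\mathfrak n$ by $V$ is isomorphic (as a graded Lie algebra) either to the semidirect product $\mathfrak n\ltimes V$ (non-zero brackets $[X,Z_1]=Z_2$, $[X,Y_i]=Y_{i+1}$, $i=1,\dots,s-1$), or, only when $s=3$, to the $6$-dimensional graded Lie algebra $\langle X,Z_1,Z_2,Y_1,Y_2,Y_3\rangle$ with non-zero brackets $[X,Y_1]=Y_2$, $[X,Y_2]=Y_3$, $[X,Z_1]=Z_2$, $[Z_1,Z_2]=Y_3$; this latter algebra is not isomorphic to the semidirect product. In particular, up to isomorphism there is exactly one non-trivial special extension of the $3$-dimensional Heisenberg algebra.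
   Context: A GNLA is a negatively graded Lie algebra $\bigoplus_{i\ge1}\mathfrak n_{-i}$ generated by $\mathfrak n_{-1}$. A special extension of $\mathfrak n$ by the graded $\mathfrak n$-module $V$ is a graded Lie algebra $\mathfrak m$ fitting into an exact sequence of graded Lie algebras $0\to V\to\mathfrak m\to\mathfrak n\to0$ in which $V$ is an abelian ideal and the action of $\mathfrak n=\mathfrak m/V$ on $V$ induced by the bracket is the given module structure; equivalently $\mathfrak m=\mathfrak n\oplus V$ with bracket $[(x_1,v_1),(x_2,v_2)]=([x_1,x_2],x_1.v_2-x_2.v_1+\alpha(x_1,x_2))$ for some degree-preserving $2$-cocycle $\alpha:\wedge^2\mathfrak n\to V$. *)

theory Defs
  imports Main
begin

text \<open>
An element of the Heisenberg GNLA n = <X, Z1, Z2> is a function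
x :: nat => 'k supported on {0,1,2}: x 0, x 1, x 2 are the coefficients of
X, Z1, Z2.  An element of V = <Y1,...,Ys> is a function v :: nat => 'k
supported on {1..s}: v i is the coefficient of Y_i.
\<close>

definition vadd :: "(nat \<Rightarrow> 'k::field) \<Rightarrow> (nat \<Rightarrow> 'k) \<Rightarrow> nat \<Rightarrow> 'k" where
  "vadd f g = (\<lambda>i. f i + g i)"

definition vsmul :: "'k::field \<Rightarrow> (nat \<Rightarrow> 'k) \<Rightarrow> nat \<Rightarrow> 'k" where
  "vsmul a f = (\<lambda>i. a * f i)"

definition vzero :: "nat \<Rightarrow> 'k::field" where
  "vzero = (\<lambda>i. 0)"

definition padd :: "(nat \<Rightarrow> 'k::field) \<times> (nat \<Rightarrow> 'k) \<Rightarrow> (nat \<Rightarrow> 'k) \<times> (nat \<Rightarrow> 'k)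
                     \<Rightarrow> (nat \<Rightarrow> 'k) \<times> (nat \<Rightarrow> 'k)" where
  "padd p q = (vadd (fst p) (fst q), vadd (snd p) (snd q))"

definition psmul :: "'k::field \<Rightarrow> (nat \<Rightarrow> 'k) \<times> (nat \<Rightarrow> 'k) \<Rightarrow> (nat \<Rightarrow> 'k) \<times> (nat \<Rightarrow> 'k)" where
  "psmul a p = (vsmul a (fst p), vsmul a (snd p))"

definition Nsp :: "(nat \<Rightarrow> 'k::field) set" where
  "Nsp = {x. \<forall>i. i \<notin> {0,1,2} \<longrightarrow> x i = 0}"

definition Vsp :: "nat \<Rightarrow> (nat \<Rightarrow> 'k::field) set" where
  "Vsp s = {v. \<forall>i. i \<notin> {1..s} \<longrightarrow> v i = 0}"

definition Msp :: "nat \<Rightarrow> ((nat \<Rightarrow> 'k::field) \<times> (nat \<Rightarrow> 'k)) set" where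
  "Msp s = Nsp \<times> Vsp s"

definition degN :: "nat \<Rightarrow> int" where
  "degN i = (if i = 2 then -2 else -1)"

definition degV :: "nat \<Rightarrow> int" where
  "degV i = - int i"

definition homN :: "int \<Rightarrow> (nat \<Rightarrow> 'k::field) set" where
  "homN d = {x \<in> Nsp. \<forall>i. x i \<noteq> 0 \<longrightarrow> degN i = d}"

definition homV :: "nat \<Rightarrow> int \<Rightarrow> (nat \<Rightarrow> 'k::field) set" where
  "homV s d = {v \<in> Vsp s. \<forall>i. v i \<noteq> 0 \<longrightarrow> degV i = d}"

definition homM :: "nat \<Rightarrow> int \<Rightarrow> ((nat \<Rightarrow> 'k::field) \<times> (nat \<Rightarrow> 'k)) set" where
  "homM s d = homN d \<times> homV s d"

definition brN :: "(nat \<Rightarrow> 'k::field) \<Rightarrow> (nat \<Rightarrow> 'k) \<Rightarrow> nat \<Rightarrow> 'k" where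
  "brN x y = (\<lambda>i. if i = 2 then x 0 * y 1 - x 1 * y 0 else 0)"

definition actV :: "nat \<Rightarrow> (nat \<Rightarrow> 'k::field) \<Rightarrow> (nat \<Rightarrow> 'k) \<Rightarrow> nat \<Rightarrow> 'k" where
  "actV s x v = (\<lambda>i. if 2 \<le> i \<and> i \<le> s then x 0 * v (i - 1) else 0)"

definition special_cocycle :: "nat \<Rightarrow> ((nat \<Rightarrow> 'k::field) \<Rightarrow> (nat \<Rightarrow> 'k) \<Rightarrow> nat \<Rightarrow> 'k) \<Rightarrow> bool" where
  "special_cocycle s \<alpha> \<longleftrightarrow>
     (\<forall>x\<in>Nsp. \<forall>y\<in>Nsp. \<alpha> x y \<in> Vsp s) \<and>
     (\<forall>x\<in>Nsp. \<forall>y\<in>Nsp. \<forall>z\<in>Nsp. \<alpha> (vadd x y) z = vadd (\<alpha> x z) (\<alpha> y z)) \<and>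
     (\<forall>a. \<forall>x\<in>Nsp. \<forall>z\<in>Nsp. \<alpha> (vsmul a x) z = vsmul a (\<alpha> x z)) \<and>
     (\<forall>x\<in>Nsp. \<forall>y\<in>Nsp. \<forall>z\<in>Nsp. \<alpha> z (vadd x y) = vadd (\<alpha> z x) (\<alpha> z y)) \<and>
     (\<forall>a. \<forall>x\<in>Nsp. \<forall>z\<in>Nsp. \<alpha> z (vsmul a x) = vsmul a (\<alpha> z x)) \<and>
     (\<forall>x\<in>Nsp. \<alpha> x x = vzero) \<and>
     (\<forall>d1 d2 x y. x \<in> homN d1 \<longrightarrow> y \<in> homN d2 \<longrightarrow> \<alpha> x y \<in> homV s (d1 + d2)) \<and>
     (\<forall>x\<in>Nsp. \<forall>y\<in>Nsp. \<forall>z\<in>Nsp.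
        (\<lambda>i. actV s x (\<alpha> y z) i - actV s y (\<alpha> x z) i + actV s z (\<alpha> x y) i
             - \<alpha> (brN x y) z i + \<alpha> (brN x z) y i - \<alpha> (brN y z) x i) = vzero)"

definition ext_br :: "nat \<Rightarrow> ((nat \<Rightarrow> 'k::field) \<Rightarrow> (nat \<Rightarrow> 'k) \<Rightarrow> nat \<Rightarrow> 'k)
    \<Rightarrow> (nat \<Rightarrow> 'k) \<times> (nat \<Rightarrow> 'k) \<Rightarrow> (nat \<Rightarrow> 'k) \<times> (nat \<Rightarrow> 'k) \<Rightarrow> (nat \<Rightarrow> 'k) \<times> (nat \<Rightarrow> 'k)" where
  "ext_br s \<alpha> p q =
     (brN (fst p) (fst q),
      (\<lambda>i. actV s (fst p) (snd q) i - actV s (fst q) (snd p) i + \<alpha> (fst p) (fst q) i))"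

definition sd_br :: "nat \<Rightarrow> (nat \<Rightarrow> 'k::field) \<times> (nat \<Rightarrow> 'k) \<Rightarrow> (nat \<Rightarrow> 'k) \<times> (nat \<Rightarrow> 'k)
    \<Rightarrow> (nat \<Rightarrow> 'k) \<times> (nat \<Rightarrow> 'k)" where
  "sd_br s = ext_br s (\<lambda>x y. vzero)"

text \<open>The 6-dimensional algebra <X,Z1,Z2,Y1,Y2,Y3> with non-zero brackets
  [X,Y1]=Y2, [X,Y2]=Y3, [X,Z1]=Z2, [Z1,Z2]=Y3 (same underlying graded
  space as n (+) V for s = 3), given by its structure constants.\<close>

definition L6_br :: "(nat \<Rightarrow> 'k::field) \<times> (nat \<Rightarrow> 'k) \<Rightarrow> (nat \<Rightarrow> 'k) \<times> (nat \<Rightarrow> 'k)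
    \<Rightarrow> (nat \<Rightarrow> 'k) \<times> (nat \<Rightarrow> 'k)" where
  "L6_br p q =
     (let x = fst p; v = snd p; y = fst q; w = snd q in
      ((\<lambda>i. if i = 2 then x 0 * y 1 - x 1 * y 0 else 0),
       (\<lambda>i. if i = 2 then x 0 * w 1 - y 0 * v 1
            else if i = 3 then x 0 * w 2 - y 0 * v 2 + x 1 * y 2 - x 2 * y 1
            else 0)))"

definition gl_iso :: "nat \<Rightarrow> ((nat \<Rightarrow> 'k::field) \<times> (nat \<Rightarrow> 'k) \<Rightarrow> (nat \<Rightarrow> 'k) \<times> (nat \<Rightarrow> 'k) \<Rightarrow> (nat \<Rightarrow> 'k) \<times> (nat \<Rightarrow> 'k))
   \<Rightarrow> ((nat \<Rightarrow> 'k) \<times> (nat \<Rightarrow> 'k) \<Rightarrow> (nat \<Rightarrow> 'k) \<times> (nat \<Rightarrow> 'k) \<Rightarrow> (nat \<Rightarrow> 'k) \<times> (nat \<Rightarrow> 'k))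
   \<Rightarrow> ((nat \<Rightarrow> 'k) \<times> (nat \<Rightarrow> 'k) \<Rightarrow> (nat \<Rightarrow> 'k) \<times> (nat \<Rightarrow> 'k)) \<Rightarrow> bool" where
  "gl_iso s br1 br2 \<phi> \<longleftrightarrow>
     bij_betw \<phi> (Msp s) (Msp s) \<and>
     (\<forall>p\<in>Msp s. \<forall>q\<in>Msp s. \<phi> (padd p q) = padd (\<phi> p) (\<phi> q)) \<and>
     (\<forall>a. \<forall>p\<in>Msp s. \<phi> (psmul a p) = psmul a (\<phi> p)) \<and>
     (\<forall>d. \<forall>p\<in>homM s d. \<phi> p \<in> homM s d) \<and>
     (\<forall>p\<in>Msp s. \<forall>q\<in>Msp s. \<phi> (br1 p q) = br2 (\<phi> p) (\<phi> q))"

definition gl_isomorphic :: "nat \<Rightarrow> ((nat \<Rightarrow> 'k::field) \<times> (nat \<Rightarrow> 'k) \<Rightarrow> (nat \<Rightarrow> 'k) \<times> (nat \<Rightarrow> 'k) \<Rightarrow> (nat \<Rightarrow> 'k) \<times> (nat \<Rightarrow> 'k))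
   \<Rightarrow> ((nat \<Rightarrow> 'k) \<times> (nat \<Rightarrow> 'k) \<Rightarrow> (nat \<Rightarrow> 'k) \<times> (nat \<Rightarrow> 'k) \<Rightarrow> (nat \<Rightarrow> 'k) \<times> (nat \<Rightarrow> 'k)) \<Rightarrow> bool" where
  "gl_isomorphic s br1 br2 \<longleftrightarrow> (\<exists>\<phi>. gl_iso s br1 br2 \<phi>)"

end

theory Submission
  imports Defs
begin

(*
  1. A degree-preserving alternating bilinear map alpha on n is determined by
     its three values on basis pairs; by degree reasons these are
     alpha(X,Z1) = a Y2, alpha(X,Z2) = b Y3, alpha(Z1,Z2) = c Y3.  So every
     special cocycle is a "standard cocycle" std_cocycle a b c.
  2. The degree-3 coefficients vanish if s < 3 (Y3 does not exist), and the
     cocycle identity evaluated on (X, Z1, Z2) in the Y4-component forces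
     c = 0 when s >= 4.
  3. The graded change of coordinates  (x, v) |-> (x, (v + (a+b) x1 Y1 + b x2 Y2) / d)
     ("twist") kills the coboundary part a, b and rescales c to c/d.  With
     d = 1 (c = 0) one lands in the semidirect product, with d = c (s = 3)
     in the 6-dimensional algebra L6 = ext_br 3 (std_cocycle 0 0 1).
  4. L6 is not isomorphic to the semidirect product: Z2 is central in the
     semidirect product, but every central element of L6 has degree -3, and
     graded isomorphisms preserve both centrality and degree.
*)

definition eX :: "nat \<Rightarrow> 'k::field" where "eX = (\<lambda>i. if i = 0 then 1 else 0)"
definition eZ1 :: "nat \<Rightarrow> 'k::field" where "eZ1 = (\<lambda>i. if i = 1 then 1 else 0)"
definition eZ2 :: "nat \<Rightarrow> 'k::field" where "eZ2 = (\<lambda>i. if i = 2 then 1 else 0)"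

lemma Nsp_iff: "x \<in> Nsp \<longleftrightarrow> (\<forall>i>2. x i = 0)"
  by (auto simp: Nsp_def)

lemma Vsp_iff: "v \<in> Vsp s \<longleftrightarrow> (\<forall>i. (i = 0 \<or> s < i) \<longrightarrow> v i = 0)"
  by (auto simp: Vsp_def) (metis Suc_leI not_gr0)+

lemma basis_Nsp [simp]: "eX \<in> Nsp" "eZ1 \<in> Nsp" "eZ2 \<in> Nsp"
  by (auto simp: Nsp_iff eX_def eZ1_def eZ2_def)

lemma basis_homN: "eX \<in> homN (-1)" "eZ1 \<in> homN (-1)" "eZ2 \<in> homN (-2)"
  by (auto simp: homN_def Nsp_iff eX_def eZ1_def eZ2_def degN_def)

lemma vadd_Nsp [simp]: "x \<in> Nsp \<Longrightarrow> y \<in> Nsp \<Longrightarrow> vadd x y \<in> Nsp"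
  and vsmul_Nsp [simp]: "x \<in> Nsp \<Longrightarrow> vsmul a x \<in> Nsp"
  and brN_Nsp [simp]: "brN x y \<in> Nsp"
  by (auto simp: Nsp_iff vadd_def vsmul_def brN_def)

lemma Nsp_basis_expansion:
  "x \<in> Nsp \<Longrightarrow> x = vadd (vsmul (x 0) eX) (vadd (vsmul (x 1) eZ1) (vsmul (x 2) eZ2))"
proof (rule ext)
  fix i assume "x \<in> Nsp"
  then show "x i = vadd (vsmul (x 0) eX) (vadd (vsmul (x 1) eZ1) (vsmul (x 2) eZ2)) i"
    by (cases "i = 0 \<or> i = 1 \<or> i = 2") (auto simp: Nsp_iff vadd_def vsmul_def eX_def eZ1_def eZ2_def)
qed

lemma cocycle_linear_left:
  assumes "special_cocycle s \<alpha>" "x \<in> Nsp" "z \<in> Nsp"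
  shows "\<alpha> x z i = x 0 * \<alpha> eX z i + x 1 * \<alpha> eZ1 z i + x 2 * \<alpha> eZ2 z i"
proof -
  from assms(1) have add: "\<forall>x\<in>Nsp. \<forall>y\<in>Nsp. \<forall>z\<in>Nsp. \<alpha> (vadd x y) z = vadd (\<alpha> x z) (\<alpha> y z)"
    and smul: "\<forall>a. \<forall>x\<in>Nsp. \<forall>z\<in>Nsp. \<alpha> (vsmul a x) z = vsmul a (\<alpha> x z)"
    by (simp_all add: special_cocycle_def)
  have "\<alpha> x z = \<alpha> (vadd (vsmul (x 0) eX) (vadd (vsmul (x 1) eZ1) (vsmul (x 2) eZ2))) z"
    using Nsp_basis_expansion assms(2) by metis
  also have "\<dots> = vadd (vsmul (x 0) (\<alpha> eX z)) (vadd (vsmul (x 1) (\<alpha> eZ1 z)) (vsmul (x 2) (\<alpha> eZ2 z)))"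
    using assms(3) by (simp add: add[rule_format] smul[rule_format])
  finally show ?thesis by (simp add: vadd_def vsmul_def)
qed

lemma cocycle_linear_right:
  assumes "special_cocycle s \<alpha>" "x \<in> Nsp" "z \<in> Nsp"
  shows "\<alpha> z x i = x 0 * \<alpha> z eX i + x 1 * \<alpha> z eZ1 i + x 2 * \<alpha> z eZ2 i"
proof -
  from assms(1) have add: "\<forall>x\<in>Nsp. \<forall>y\<in>Nsp. \<forall>z\<in>Nsp. \<alpha> z (vadd x y) = vadd (\<alpha> z x) (\<alpha> z y)"
    and smul: "\<forall>a. \<forall>x\<in>Nsp. \<forall>z\<in>Nsp. \<alpha> z (vsmul a x) = vsmul a (\<alpha> z x)"
    by (simp_all add: special_cocycle_def)
  have "\<alpha> z x = \<alpha> z (vadd (vsmul (x 0) eX) (vadd (vsmul (x 1) eZ1) (vsmul (x 2) eZ2)))"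
    using Nsp_basis_expansion assms(2) by metis
  also have "\<dots> = vadd (vsmul (x 0) (\<alpha> z eX)) (vadd (vsmul (x 1) (\<alpha> z eZ1)) (vsmul (x 2) (\<alpha> z eZ2)))"
    using assms(3) by (simp add: add[rule_format] smul[rule_format])
  finally show ?thesis by (simp add: vadd_def vsmul_def)
qed

lemma cocycle_antisymmetric:
  assumes "special_cocycle s \<alpha>" "x \<in> Nsp" "y \<in> Nsp"
  shows "\<alpha> y x i = - \<alpha> x y i"
proof -
  from assms(1) have add1: "\<forall>x\<in>Nsp. \<forall>y\<in>Nsp. \<forall>z\<in>Nsp. \<alpha> (vadd x y) z = vadd (\<alpha> x z) (\<alpha> y z)"
    and add2: "\<forall>x\<in>Nsp. \<forall>y\<in>Nsp. \<forall>z\<in>Nsp. \<alpha> z (vadd x y) = vadd (\<alpha> z x) (\<alpha> z y)"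
    and alt: "\<forall>x\<in>Nsp. \<alpha> x x = vzero"
    by (simp_all add: special_cocycle_def)
  have "vzero = \<alpha> (vadd x y) (vadd x y)" using alt assms(2,3) by simp
  also have "\<dots> = vadd (vadd (\<alpha> x x) (\<alpha> y x)) (vadd (\<alpha> x y) (\<alpha> y y))"
    using assms(2,3) by (simp add: add1[rule_format] add2[rule_format])
  finally have "0 = \<alpha> x y i + \<alpha> y x i"
    using alt assms(2,3) by (simp add: vadd_def vzero_def fun_eq_iff add.commute)
  then show ?thesis by (simp add: eq_neg_iff_add_eq_0 add.commute)
qed

definition std_cocycle :: "'k::field \<Rightarrow> 'k \<Rightarrow> 'k \<Rightarrow> (nat \<Rightarrow> 'k) \<Rightarrow> (nat \<Rightarrow> 'k) \<Rightarrow> nat \<Rightarrow> 'k" where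
  "std_cocycle a b c x y =
     (\<lambda>i. if i = 2 then a * (x 0 * y 1 - x 1 * y 0)
          else if i = 3 then b * (x 0 * y 2 - x 2 * y 0) + c * (x 1 * y 2 - x 2 * y 1)
          else 0)"

lemma cocycle_basis_degrees:
  assumes "special_cocycle s \<alpha>"
  shows "\<alpha> eX eZ1 \<in> homV s (-2)" "\<alpha> eX eZ2 \<in> homV s (-3)" "\<alpha> eZ1 eZ2 \<in> homV s (-3)"
proof -
  have "\<forall>d1 d2 x y. x \<in> homN d1 \<longrightarrow> y \<in> homN d2 \<longrightarrow> \<alpha> x y \<in> homV s (d1 + d2)"
    using assms by (simp add: special_cocycle_def)
  then show "\<alpha> eX eZ1 \<in> homV s (-2)" "\<alpha> eX eZ2 \<in> homV s (-3)" "\<alpha> eZ1 eZ2 \<in> homV s (-3)"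
    using basis_homN by fastforce+
qed

lemma cocycle_is_std:
  assumes "special_cocycle s \<alpha>" "x \<in> Nsp" "y \<in> Nsp"
  shows "\<alpha> x y = std_cocycle (\<alpha> eX eZ1 2) (\<alpha> eX eZ2 3) (\<alpha> eZ1 eZ2 3) x y"
proof (rule ext)
  fix i
  have alt: "\<alpha> e e i = 0" if "e \<in> Nsp" for e
    using assms(1) that by (simp add: special_cocycle_def vzero_def)
  have expansion: "\<alpha> x y i = (x 0 * y 1 - x 1 * y 0) * \<alpha> eX eZ1 i
      + (x 0 * y 2 - x 2 * y 0) * \<alpha> eX eZ2 i + (x 1 * y 2 - x 2 * y 1) * \<alpha> eZ1 eZ2 i"
    using cocycle_linear_left[OF assms, of i]
      cocycle_linear_right[OF assms(1,3), of _ i, OF basis_Nsp(1)]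
      cocycle_linear_right[OF assms(1,3), of _ i, OF basis_Nsp(2)]
      cocycle_linear_right[OF assms(1,3), of _ i, OF basis_Nsp(3)]
      cocycle_antisymmetric[OF assms(1), of _ _ i, OF basis_Nsp(1) basis_Nsp(2)]
      cocycle_antisymmetric[OF assms(1), of _ _ i, OF basis_Nsp(1) basis_Nsp(3)]
      cocycle_antisymmetric[OF assms(1), of _ _ i, OF basis_Nsp(2) basis_Nsp(3)]
      alt[OF basis_Nsp(1)] alt[OF basis_Nsp(2)] alt[OF basis_Nsp(3)]
    by (simp add: algebra_simps)
  have "\<alpha> eX eZ1 i = (if i = 2 then \<alpha> eX eZ1 2 else 0)"
       "\<alpha> eX eZ2 i = (if i = 3 then \<alpha> eX eZ2 3 else 0)"
       "\<alpha> eZ1 eZ2 i = (if i = 3 then \<alpha> eZ1 eZ2 3 else 0)"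
    using cocycle_basis_degrees[OF assms(1)] by (auto simp: homV_def degV_def)
  then show "\<alpha> x y i = std_cocycle (\<alpha> eX eZ1 2) (\<alpha> eX eZ2 3) (\<alpha> eZ1 eZ2 3) x y i"
    by (simp add: expansion std_cocycle_def algebra_simps)
qed

(* Step 2: alpha(X,Z2) needs Y3 to exist; alpha(Z1,Z2) survives only for s = 3,
   since for s >= 4 the cocycle identity on (X,Z1,Z2) in degree -4 reads
   X.alpha(Z1,Z2) = 0, i.e. c Y4 = 0. *)
lemma cocycle_coefficients_vanish:
  assumes "special_cocycle s \<alpha>"
  shows "s < 3 \<Longrightarrow> \<alpha> eX eZ2 3 = 0" and "s \<noteq> 3 \<Longrightarrow> \<alpha> eZ1 eZ2 3 = 0"
proof -
  show "s < 3 \<Longrightarrow> \<alpha> eX eZ2 3 = 0"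
    using cocycle_basis_degrees(2)[OF assms] by (auto simp: homV_def Vsp_iff)
  assume "s \<noteq> 3"
  moreover have "s < 3 \<Longrightarrow> \<alpha> eZ1 eZ2 3 = 0"
    using cocycle_basis_degrees(3)[OF assms] by (auto simp: homV_def Vsp_iff)
  moreover have "\<alpha> eZ1 eZ2 3 = 0" if s4: "4 \<le> s"
  proof -
    have "\<forall>x\<in>Nsp. \<forall>y\<in>Nsp. \<forall>z\<in>Nsp.
        (\<lambda>i. actV s x (\<alpha> y z) i - actV s y (\<alpha> x z) i + actV s z (\<alpha> x y) i
             - \<alpha> (brN x y) z i + \<alpha> (brN x z) y i - \<alpha> (brN y z) x i) = vzero"
      using assms by (simp add: special_cocycle_def)
    moreover have std4: "\<alpha> u u' 4 = 0" if "u \<in> Nsp" "u' \<in> Nsp" for u u'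
      using cocycle_is_std[OF assms that] by (simp add: std_cocycle_def)
    ultimately have "actV s eX (\<alpha> eZ1 eZ2) 4 - actV s eZ1 (\<alpha> eX eZ2) 4 + actV s eZ2 (\<alpha> eX eZ1) 4
        - \<alpha> (brN eX eZ1) eZ2 4 + \<alpha> (brN eX eZ2) eZ1 4 - \<alpha> (brN eZ1 eZ2) eX 4 = 0"
      by (fastforce simp: vzero_def dest: fun_cong[where x = 4])
    then show ?thesis
      using s4 std4[OF brN_Nsp basis_Nsp(1)] std4[OF brN_Nsp basis_Nsp(2)] std4[OF brN_Nsp basis_Nsp(3)]
      by (simp add: actV_def eX_def eZ1_def eZ2_def)
  qed
  ultimately show "\<alpha> eZ1 eZ2 3 = 0" by linarith
qed

(* Step 3: the graded change of coordinates (x, v) |-> (x, (v + q x1 Y1 + r x2 Y2) / d),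
   i.e. adding a coboundary and rescaling V. *)
definition twist :: "'k::field \<Rightarrow> 'k \<Rightarrow> 'k \<Rightarrow> (nat \<Rightarrow> 'k) \<times> (nat \<Rightarrow> 'k) \<Rightarrow> (nat \<Rightarrow> 'k) \<times> (nat \<Rightarrow> 'k)" where
  "twist q r d p =
     (fst p, \<lambda>i. (snd p i + (if i = 1 then q * fst p 1 else if i = 2 then r * fst p 2 else 0)) / d)"

definition untwist :: "'k::field \<Rightarrow> 'k \<Rightarrow> 'k \<Rightarrow> (nat \<Rightarrow> 'k) \<times> (nat \<Rightarrow> 'k) \<Rightarrow> (nat \<Rightarrow> 'k) \<times> (nat \<Rightarrow> 'k)" where
  "untwist q r d p =
     (fst p, \<lambda>i. d * snd p i - (if i = 1 then q * fst p 1 else if i = 2 then r * fst p 2 else 0))"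

lemma twist_bij:
  assumes "2 \<le> s" "d \<noteq> 0"
  shows "bij_betw (twist q r d) (Msp s) (Msp s)"
proof (rule bij_betw_byWitness[where f' = "untwist q r d"])
  show "\<forall>p\<in>Msp s. untwist q r d (twist q r d p) = p"
    and "\<forall>p\<in>Msp s. twist q r d (untwist q r d p) = p"
    using assms by (auto simp: twist_def untwist_def)
  show "twist q r d ` Msp s \<subseteq> Msp s" and "untwist q r d ` Msp s \<subseteq> Msp s"
    using assms by (auto simp: twist_def untwist_def Msp_def Vsp_iff)
qed

(* The twist preserves degrees, because deg Y1 = deg Z1 and deg Y2 = deg Z2. *)
lemma twist_graded:
  assumes "2 \<le> s" "p \<in> homM s e"
  shows "twist q r d p \<in> homM s e"
proof -
  have x: "fst p \<in> homN e" and v: "snd p \<in> homV s e" using assms(2) by (auto simp: homM_def)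
  have "(\<lambda>i. (snd p i + (if i = 1 then q * fst p 1 else if i = 2 then r * fst p 2 else 0)) / d)
      \<in> homV s e"
    unfolding homV_def
  proof (intro CollectI conjI allI impI)
    show "(\<lambda>i. (snd p i + (if i = 1 then q * fst p 1 else if i = 2 then r * fst p 2 else 0)) / d)
        \<in> Vsp s"
      using v assms(1) by (auto simp: homV_def Vsp_iff)
    fix i
    assume nz: "(snd p i + (if i = 1 then q * fst p 1 else if i = 2 then r * fst p 2 else 0)) / d \<noteq> 0"
    show "degV i = e"
    proof (cases "snd p i = 0")
      case False
      then show ?thesis using v by (auto simp: homV_def)
    next
      case True
      then have "(i = 1 \<and> fst p 1 \<noteq> 0) \<or> (i = 2 \<and> fst p 2 \<noteq> 0)" using nz by (auto split: if_splits)
      then show ?thesis using x by (auto simp: homN_def degN_def degV_def)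
    qed
  qed
  then show ?thesis using x by (simp add: twist_def homM_def)
qed

lemma twist_bracket:
  fixes a b c d :: "'k::field"
  assumes s: "2 \<le> s" "3 \<le> s \<or> b = 0" and d: "d \<noteq> 0"
  shows "twist (a + b) b d (ext_br s (std_cocycle a b c) (x, v) (y, w))
       = ext_br s (std_cocycle 0 0 (c / d)) (twist (a + b) b d (x, v)) (twist (a + b) b d (y, w))"
    (is "?lhs = ?rhs")
proof (rule prod_eqI)
  show "fst ?lhs = fst ?rhs" by (simp add: twist_def ext_br_def)
  show "snd ?lhs = snd ?rhs"
  proof (rule ext)
    fix i :: nat
    consider "i \<le> 1" | "i = 2" | "i = 3" | "4 \<le> i" by linarith
    then show "snd ?lhs i = snd ?rhs i"
    proof cases
      case 1
      then show ?thesis by (auto simp: twist_def ext_br_def actV_def std_cocycle_def brN_def)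
    next
      case 2
      then show ?thesis using s d
        by (simp add: twist_def ext_br_def actV_def std_cocycle_def brN_def field_simps)
    next
      case 3
      then show ?thesis using s d
        by (cases "3 \<le> s") (auto simp: twist_def ext_br_def actV_def std_cocycle_def brN_def field_simps)
    next
      case 4
      then have "i \<noteq> 1" "i \<noteq> 2" "i \<noteq> 3" "i - 1 \<noteq> 1" "i - 1 \<noteq> 2" by auto
      then show ?thesis by (simp add: twist_def ext_br_def actV_def std_cocycle_def brN_def diff_divide_distrib)
    qed
  qed
qed

lemma twist_iso:
  fixes a b c d :: "'k::field"
  assumes s: "2 \<le> s" "3 \<le> s \<or> b = 0" and d: "d \<noteq> 0"
    and std: "\<forall>x\<in>Nsp. \<forall>y\<in>Nsp. \<alpha> x y = std_cocycle a b c x y"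
  shows "gl_iso s (ext_br s \<alpha>) (ext_br s (std_cocycle 0 0 (c / d))) (twist (a + b) b d)"
  unfolding gl_iso_def
proof (intro conjI ballI allI)
  show "bij_betw (twist (a + b) b d) (Msp s) (Msp s)" using twist_bij s(1) d .
  show "twist (a + b) b d p \<in> homM s e" if "p \<in> homM s e" for e p
    using twist_graded s(1) that .
  fix p p' :: "(nat \<Rightarrow> 'k) \<times> (nat \<Rightarrow> 'k)" and k :: 'k
  show "twist (a + b) b d (padd p p') = padd (twist (a + b) b d p) (twist (a + b) b d p')"
    by (auto simp: twist_def padd_def vadd_def add_divide_distrib algebra_simps)
  show "twist (a + b) b d (psmul k p) = psmul k (twist (a + b) b d p)"
    by (auto simp: twist_def psmul_def vsmul_def algebra_simps)
  assume "p \<in> Msp s" "p' \<in> Msp s"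
  then obtain x v y w where "p = (x, v)" "p' = (y, w)" "x \<in> Nsp" "y \<in> Nsp"
    by (auto simp: Msp_def)
  then show "twist (a + b) b d (ext_br s \<alpha> p p')
      = ext_br s (std_cocycle 0 0 (c / d)) (twist (a + b) b d p) (twist (a + b) b d p')"
    using twist_bracket[OF s d] std by (simp add: ext_br_def)
qed

lemma sd_br_std: "sd_br s = ext_br s (std_cocycle (0 :: 'k::field) 0 0)"
proof -
  have "std_cocycle 0 0 0 = (\<lambda>x y. (vzero :: nat \<Rightarrow> 'k::field))"
    by (simp add: std_cocycle_def vzero_def fun_eq_iff)
  then show ?thesis by (simp add: sd_br_def)
qed

lemma L6_br_std: "L6_br = ext_br 3 (std_cocycle 0 0 1)"
  by (auto simp: L6_br_def ext_br_def std_cocycle_def actV_def brN_def fun_eq_iff)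

lemma std_cocycle_special:
  fixes a b c :: "'k::field"
  shows "special_cocycle 3 (std_cocycle a b c)"
  unfolding special_cocycle_def
proof (intro conjI ballI allI impI)
  fix d1 d2 and x y :: "nat \<Rightarrow> 'k"
  assume x: "x \<in> homN d1" and y: "y \<in> homN d2"
  have dx: "degN j = d1" if "x j \<noteq> 0" for j using x that by (simp add: homN_def)
  have dy: "degN j = d2" if "y j \<noteq> 0" for j using y that by (simp add: homN_def)
  show "std_cocycle a b c x y \<in> homV 3 (d1 + d2)"
    unfolding homV_def
  proof (intro CollectI conjI allI impI)
    show "std_cocycle a b c x y \<in> Vsp 3" by (simp add: std_cocycle_def Vsp_def)
    fix i assume "std_cocycle a b c x y i \<noteq> 0"
    then have "(i = 2 \<and> (x 0 \<noteq> 0 \<and> y 1 \<noteq> 0 \<or> x 1 \<noteq> 0 \<and> y 0 \<noteq> 0)) \<or>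
        (i = 3 \<and> (x 0 \<noteq> 0 \<and> y 2 \<noteq> 0 \<or> x 2 \<noteq> 0 \<and> y 0 \<noteq> 0 \<or>
                  x 1 \<noteq> 0 \<and> y 2 \<noteq> 0 \<or> x 2 \<noteq> 0 \<and> y 1 \<noteq> 0))"
      by (auto simp: std_cocycle_def split: if_splits)
    then show "degV i = d1 + d2"
      using dx[of 0] dx[of 1] dx[of 2] dy[of 0] dy[of 1] dy[of 2] by (auto simp: degN_def degV_def)
  qed
next
  fix x y z :: "nat \<Rightarrow> 'k"
  show "(\<lambda>i. actV 3 x (std_cocycle a b c y z) i - actV 3 y (std_cocycle a b c x z) i
           + actV 3 z (std_cocycle a b c x y) i - std_cocycle a b c (brN x y) z i
           + std_cocycle a b c (brN x z) y i - std_cocycle a b c (brN y z) x i) = vzero"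
  proof (rule ext)
    fix i :: nat
    consider "i = 2" | "i = 3" | "i \<noteq> 2" "i \<noteq> 3" by blast
    then show "actV 3 x (std_cocycle a b c y z) i - actV 3 y (std_cocycle a b c x z) i
           + actV 3 z (std_cocycle a b c x y) i - std_cocycle a b c (brN x y) z i
           + std_cocycle a b c (brN x z) y i - std_cocycle a b c (brN y z) x i = vzero i"
      by cases (simp_all add: actV_def std_cocycle_def brN_def vzero_def algebra_simps)
  qed
qed (simp_all add: std_cocycle_def Vsp_def vadd_def vsmul_def vzero_def fun_eq_iff algebra_simps)

lemma special_extension_classification:
  assumes s: "2 \<le> s" and \<alpha>: "special_cocycle s \<alpha>"
  shows "gl_isomorphic s (ext_br s \<alpha>) (sd_br s) \<or> (s = 3 \<and> gl_isomorphic s (ext_br s \<alpha>) L6_br)"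
proof -
  define a b c where "a = \<alpha> eX eZ1 2" and "b = \<alpha> eX eZ2 3" and "c = \<alpha> eZ1 eZ2 3"
  have std: "\<forall>x\<in>Nsp. \<forall>y\<in>Nsp. \<alpha> x y = std_cocycle a b c x y"
    unfolding a_def b_def c_def using cocycle_is_std[OF \<alpha>] by blast
  have b: "3 \<le> s \<or> b = 0" and c: "c \<noteq> 0 \<Longrightarrow> s = 3"
    unfolding b_def c_def using cocycle_coefficients_vanish[OF \<alpha>] by (linarith, blast)
  show ?thesis
  proof (cases "c = 0")
    case True
    have "gl_iso s (ext_br s \<alpha>) (ext_br s (std_cocycle 0 0 (c / 1))) (twist (a + b) b 1)"
      using twist_iso[OF s b one_neq_zero std] .
    then have "gl_iso s (ext_br s \<alpha>) (sd_br s) (twist (a + b) b 1)"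
      unfolding sd_br_std True by simp
    then show ?thesis by (auto simp: gl_isomorphic_def)
  next
    case False
    have "gl_iso s (ext_br s \<alpha>) (ext_br s (std_cocycle 0 0 (c / c))) (twist (a + b) b c)"
      using twist_iso[OF s b False std] .
    then have "gl_iso s (ext_br s \<alpha>) L6_br (twist (a + b) b c)"
      unfolding L6_br_std using False c by simp
    then show ?thesis using False c by (auto simp: gl_isomorphic_def)
  qed
qed

definition central ::
  "((nat \<Rightarrow> 'k::field) \<times> (nat \<Rightarrow> 'k) \<Rightarrow> (nat \<Rightarrow> 'k) \<times> (nat \<Rightarrow> 'k) \<Rightarrow> (nat \<Rightarrow> 'k) \<times> (nat \<Rightarrow> 'k))
   \<Rightarrow> nat \<Rightarrow> (nat \<Rightarrow> 'k) \<times> (nat \<Rightarrow> 'k) \<Rightarrow> bool" where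
  "central br s p \<longleftrightarrow> (\<forall>q\<in>Msp s. br p q = (vzero, vzero))"

(* An isomorphism is injective and maps 0 to 0, so it reflects centrality. *)
lemma gl_iso_reflects_central:
  fixes \<phi> :: "(nat \<Rightarrow> 'k::field) \<times> (nat \<Rightarrow> 'k) \<Rightarrow> (nat \<Rightarrow> 'k) \<times> (nat \<Rightarrow> 'k)"
  assumes iso: "gl_iso s br1 br2 \<phi>" and closed: "\<forall>p\<in>Msp s. \<forall>q\<in>Msp s. br1 p q \<in> Msp s"
    and p: "p \<in> Msp s" and central: "central br2 s (\<phi> p)"
  shows "central br1 s p"
  unfolding central_def
proof
  fix q :: "(nat \<Rightarrow> 'k) \<times> (nat \<Rightarrow> 'k)"
  assume q: "q \<in> Msp s"
  have bij: "bij_betw \<phi> (Msp s) (Msp s)"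
    and smul: "\<forall>a. \<forall>p\<in>Msp s. \<phi> (psmul a p) = psmul a (\<phi> p)"
    and br: "\<forall>p\<in>Msp s. \<forall>q\<in>Msp s. \<phi> (br1 p q) = br2 (\<phi> p) (\<phi> q)"
    using iso by (simp_all add: gl_iso_def)
  have zero: "(vzero, vzero) \<in> Msp s" and "psmul 0 (vzero, vzero) = (vzero, vzero :: nat \<Rightarrow> 'k)"
    by (simp_all add: Msp_def Nsp_def Vsp_def vzero_def psmul_def vsmul_def)
  then have "\<phi> (vzero, vzero) = psmul 0 (\<phi> (vzero, vzero))" using smul by metis
  then have \<phi>_zero: "\<phi> (vzero, vzero) = (vzero, vzero)" by (simp add: psmul_def vsmul_def vzero_def)
  have "\<phi> (br1 p q) = (vzero, vzero)"
    using br central p q bij by (auto simp: central_def bij_betw_def)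
  then have "\<phi> (br1 p q) = \<phi> (vzero, vzero)" using \<phi>_zero by simp
  then show "br1 p q = (vzero, vzero)"
    using bij closed p q zero by (auto simp: bij_betw_def dest: inj_onD)
qed

(* Bracketing with X and Z1 shows that the centre of L6 is spanned by Y3. *)
lemma L6_central_degree:
  assumes p: "p \<in> Msp 3" and central: "central L6_br 3 p"
  shows "p \<in> homM 3 (-3)"
proof -
  obtain x v where xv: "p = (x, v)" by (cases p)
  have "L6_br p (eX, vzero) = (vzero, vzero)" "L6_br p (eZ1, vzero) = (vzero, vzero)"
    using central by (simp_all add: central_def Msp_def Vsp_def vzero_def)
  then have "fst (L6_br p (eX, vzero)) 2 = 0" "snd (L6_br p (eX, vzero)) 2 = 0"
    "snd (L6_br p (eX, vzero)) 3 = 0" "fst (L6_br p (eZ1, vzero)) 2 = 0"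
    "snd (L6_br p (eZ1, vzero)) 3 = 0"
    by (simp_all add: vzero_def)
  then have "x 1 = 0" "v 1 = 0" "v 2 = 0" "x 0 = 0" "x 2 = 0"
    by (simp_all add: L6_br_def xv eX_def eZ1_def vzero_def)
  moreover have "x i = 0" for i
    using p xv \<open>x 0 = 0\<close> \<open>x 1 = 0\<close> \<open>x 2 = 0\<close>
    by (cases "i \<le> 2") (auto simp: Msp_def Nsp_iff le_Suc_eq numeral_2_eq_2)
  moreover have "v i = 0" if "i \<noteq> 3" for i
    using p xv \<open>v 1 = 0\<close> \<open>v 2 = 0\<close> that
    by (cases "i \<le> 2") (auto simp: Msp_def Vsp_iff le_Suc_eq numeral_2_eq_2 numeral_3_eq_3)
  ultimately show ?thesis
    using p xv by (auto simp: homM_def homN_def homV_def Msp_def degV_def)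
qed

(* Z2 is central in the semidirect product; its preimage under an isomorphism
   would be central in L6, hence of degree -3, contradicting deg Z2 = -2. *)
lemma L6_not_isomorphic_sd:
  "\<not> gl_isomorphic 3 (L6_br :: _ \<Rightarrow> _ \<Rightarrow> (nat \<Rightarrow> 'k::field) \<times> _) (sd_br 3)"
proof
  assume "gl_isomorphic 3 (L6_br :: _ \<Rightarrow> _ \<Rightarrow> (nat \<Rightarrow> 'k) \<times> _) (sd_br 3)"
  then obtain \<phi> :: "(nat \<Rightarrow> 'k) \<times> (nat \<Rightarrow> 'k) \<Rightarrow> (nat \<Rightarrow> 'k) \<times> (nat \<Rightarrow> 'k)"
    where iso: "gl_iso 3 L6_br (sd_br 3) \<phi>" by (auto simp: gl_isomorphic_def)
  have "(eZ2, vzero) \<in> \<phi> ` Msp 3"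
    using iso by (simp add: gl_iso_def bij_betw_def Msp_def Vsp_def vzero_def)
  then obtain p where \<phi>p: "(eZ2, vzero) = \<phi> p" and p: "p \<in> Msp 3" by (rule imageE)
  have sd_central: "central (sd_br 3) 3 (eZ2, vzero)"
    by (auto simp: central_def sd_br_def ext_br_def brN_def actV_def eZ2_def vzero_def fun_eq_iff)
  have L6_closed: "\<forall>p\<in>Msp 3. \<forall>q\<in>Msp 3. L6_br p q \<in> Msp 3"
    by (simp add: L6_br_def Let_def Msp_def Nsp_def Vsp_def)
  have "central L6_br 3 p"
    using gl_iso_reflects_central[OF iso L6_closed p] sd_central \<phi>p by metis
  then have "\<phi> p \<in> homM 3 (-3)"
    using L6_central_degree[OF p] iso by (auto simp: gl_iso_def)
  then have "(eZ2 :: nat \<Rightarrow> 'k) \<in> homN (-3)" using \<phi>p[symmetric] by (simp add: homM_def)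
  then have "eZ2 2 \<noteq> (0 :: 'k) \<longrightarrow> degN 2 = -3" unfolding homN_def by blast
  then show False by (simp add: eZ2_def degN_def)
qed

theorem mainTheorem8:
  fixes s :: nat
  assumes "2 \<le> s"
  shows "(\<forall>\<alpha> :: (nat \<Rightarrow> 'k::field_char_0) \<Rightarrow> (nat \<Rightarrow> 'k) \<Rightarrow> nat \<Rightarrow> 'k.
            special_cocycle s \<alpha> \<longrightarrow>
              gl_isomorphic s (ext_br s \<alpha>) (sd_br s) \<or>
              (s = 3 \<and> gl_isomorphic s (ext_br s \<alpha>) L6_br)) \<and>
         (s = 3 \<longrightarrow> \<not> gl_isomorphic s (L6_br :: _ \<Rightarrow> _ \<Rightarrow> (nat \<Rightarrow> 'k) \<times> _) (sd_br s)) \<and>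
         (s = 3 \<longrightarrow> (\<exists>\<alpha> :: (nat \<Rightarrow> 'k) \<Rightarrow> (nat \<Rightarrow> 'k) \<Rightarrow> nat \<Rightarrow> 'k.
            special_cocycle s \<alpha> \<and> gl_isomorphic s (ext_br s \<alpha>) L6_br))"
proof (intro conjI allI impI)
  fix \<alpha> :: "(nat \<Rightarrow> 'k) \<Rightarrow> (nat \<Rightarrow> 'k) \<Rightarrow> nat \<Rightarrow> 'k"
  assume "special_cocycle s \<alpha>"
  then show "gl_isomorphic s (ext_br s \<alpha>) (sd_br s) \<or> (s = 3 \<and> gl_isomorphic s (ext_br s \<alpha>) L6_br)"
    using special_extension_classification[OF assms] by blast
next
  assume "s = 3"
  then show "\<not> gl_isomorphic s (L6_br :: _ \<Rightarrow> _ \<Rightarrow> (nat \<Rightarrow> 'k) \<times> _) (sd_br s)"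
    using L6_not_isomorphic_sd by simp
next
  assume "s = 3"
  have "gl_iso 3 (ext_br 3 (std_cocycle 0 0 1)) (L6_br :: _ \<Rightarrow> _ \<Rightarrow> (nat \<Rightarrow> 'k) \<times> _) id"
    by (simp add: gl_iso_def L6_br_std)
  then show "\<exists>\<alpha> :: (nat \<Rightarrow> 'k) \<Rightarrow> (nat \<Rightarrow> 'k) \<Rightarrow> nat \<Rightarrow> 'k.
      special_cocycle s \<alpha> \<and> gl_isomorphic s (ext_br s \<alpha>) L6_br"
    using std_cocycle_special \<open>s = 3\<close> by (auto simp: gl_isomorphic_def)
qed

end
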